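(* Let $\mathfrak h\in\mathrm{Mult}_\rho$ and let $\mathfrak n\in\mathrm{Mult}_\rho$ be admissible to $\mathfrak h$, $\mathfrak n\ne\emptyset$. Let $a$ be the smallest integer with $\mathfrak n[a]\ne\emptyset$ and let $\Delta\in\mathfrak n[a]$. If there exists a segment $\overline\Delta\in\mathfrak n[a+1]$ with $\overline\Delta\not\subset\Delta$ and $\overline\Delta\subset\Upsilon(\Delta,\mathfrak h)$, then $(\mathfrak n,\mathfrak h)$ is locally minimizable.
   Context: Segments: for integers $a\le b$, $[a,b]_\rho$ (think of the integer interval $\{a,\dots,b\}$), with $a(\Delta)=a$, $b(\Delta)=b$, and inclusion of segments as intervals. Two segments are linked if their union is a segment (an interval) and neither contains the other. A multisegment is a finite multiset of nonempty segments; $\mathrm{Mult}_\rho$ is the set of multisegments (including $\emptyset$); $+$ and $-$ denote multiset sum and difference. For $c\in\mathbb Z$, $\mathfrak m[c]$ is the submultisegment of segments $\Delta\in\mathfrak m$ with $a(\Delta)=c$. A sequence of segments $\Delta_1,\dots,\Delta_k$ is ascending if for $i<j$ either $\Delta_i,\Delta_j$ are unlinked or $a(\Delta_i)<a(\Delta_j)$. Write $[x,y]_\rho\prec^L[x',y']_\rho$ if $x<x'$, or $x=x'$ and $y<y'$. A segment $\Delta=[a,b]_\rho$ is admissible to $\mathfrak h$ if $\mathfrak h$ contains a segment $[a,c]_\rho$ with $c\ge b$. Removal process: for $\Delta=[a,b]_\rho$ admissible to $\mathfrak h$, let $\Delta_1=[a_1,b_1]_\rho$ be a shortest segment of $\mathfrak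 h$ with $a_1=a$ and $b_1\ge b$; recursively, let $\Delta_i=[a_i,b_i]_\rho$ be the $\prec^L$-minimal segment of $\mathfrak h$ with $a_{i-1}<a_i$ and $b\le b_i<b_{i-1}$, stopping when none exists; let $\Delta_1,\dots,\Delta_r$ be the segments obtained. Put $\Delta_i^{tr}=[a_{i+1},b_i]_\rho$ for $i<r$ and $\Delta_r^{tr}=[b+1,b_r]_\rho$ (possibly empty), and $\mathfrak r(\Delta,\mathfrak h)=\mathfrak h-\sum_i\Delta_i+\sum_i\Delta_i^{tr}$; also $\Upsilon(\Delta,\mathfrak h)=\Delta_1$. If $\Delta$ is not admissible, $\mathfrak r(\Delta,\mathfrak h)=\infty$, and $\mathfrak r(\Delta,\infty)=\infty$. For $\mathfrak m$ with segments in ascending order $\Delta_1,\dots,\Delta_k$, $\mathfrak r(\mathfrak m,\mathfrak h)=\mathfrak r(\Delta_k,\dots\mathfrak r(\Delta_1,\mathfrak h)\dots)$, and $\mathfrak m$ is admissible to $\mathfrak h$ if $\mathfrak r(\mathfrak m,\mathfrak h)\ne\infty$. For $\mathfrak n\ne\emptyset$ with $a$ minimal such that $\mathfrak n[a]\ne\emptyset$, enumerate $\mathfrak n[a]=\{\Delta_1,\dots,\Delta_k\}$; if $\mathfrak n[a]$ is admissible to $\mathfrak h$, put $\mathfrak r_0=\mathfrak h$, $\mathfrak r_i=\mathfrak r(\{\Delta_i,\dots,\Delta_1\},\mathfrak h)$ and $\mathfrak{fs}(\mathfrak n,\mathfrak h)=\{\Upsilon(\Delta_1,\mathfrak r_0),\dots,\Upsilon(\Delta_k,\mathfrak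 r_{k-1})\}$ (independent of the enumeration); otherwise $\mathfrak{fs}(\mathfrak n,\mathfrak h)=\emptyset$. Local minimizability: for $\mathfrak n$ admissible to $\mathfrak h$, with $a$ minimal such that $\mathfrak n[a]\ne\emptyset$, the pair $(\mathfrak n,\mathfrak h)$ is locally minimizable if there exists $\overline\Delta\in\mathfrak n[a+1]$ with $|\{\Delta\in\mathfrak n[a]:\overline\Delta\subset\Delta\}|<|\{\Delta\in\mathfrak{fs}(\mathfrak n,\mathfrak h):\overline\Delta\subset\Delta\}|$ (cardinalities counted with multiplicity). *)

theory Defs
  imports Main "HOL-Library.Multiset" "HOL-Library.Product_Lexorder"
begin

text \<open>A segment [a,b]_rho is represented by the pair (a,b) of integers (a \<le> b);
  a multisegment is a multiset of such pairs. The lexicographic order on pairs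
  (Product_Lexorder) is exactly the order \<prec>^L of the paper.\<close>

type_synonym seg = "int \<times> int"

definition is_seg :: "seg \<Rightarrow> bool" where
  "is_seg s \<longleftrightarrow> fst s \<le> snd s"

definition is_mult :: "seg multiset \<Rightarrow> bool" where
  "is_mult m \<longleftrightarrow> (\<forall>s\<in>#m. is_seg s)"

definition seg_sub :: "seg \<Rightarrow> seg \<Rightarrow> bool" where
  "seg_sub s t \<longleftrightarrow> fst t \<le> fst s \<and> snd s \<le> snd t"

definition mult_at :: "seg multiset \<Rightarrow> int \<Rightarrow> seg multiset" where
  "mult_at m c = filter_mset (\<lambda>s. fst s = c) m"

definition seg_admissible :: "seg \<Rightarrow> seg multiset \<Rightarrow> bool" where
  "seg_admissible D h \<longleftrightarrow> (\<exists>s\<in>#h. fst s = fst D \<and> snd D \<le> snd s)"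

text \<open>Upsilon(D,h) = Delta_1: a shortest segment of h starting at a(D) with end \<ge> b(D).\<close>
definition upsilon :: "seg \<Rightarrow> seg multiset \<Rightarrow> seg" where
  "upsilon D h = Min {s \<in> set_mset h. fst s = fst D \<and> snd D \<le> snd s}"

function rchain :: "seg multiset \<Rightarrow> int \<Rightarrow> seg \<Rightarrow> seg list" where
  "rchain h b p =
    (let C = {s \<in> set_mset h. fst p < fst s \<and> b \<le> snd s \<and> snd s < snd p}
     in if C = {} then [] else Min C # rchain h b (Min C))"
  by pat_completeness auto
termination
proof (relation "measure (\<lambda>(h,b,p). nat (snd p - b))", simp)
  fix h :: "seg multiset" and b :: int and p :: seg and C
  assume C: "C = {s \<in> set_mset h. fst p < fst s \<and> b \<le> snd s \<and> snd s < snd p}"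
     and ne: "C \<noteq> {}"
  have "finite C" using C by simp
  hence "Min C \<in> C" using ne by (rule Min_in)
  thus "((h, b, Min C), h, b, p) \<in> measure (\<lambda>(h,b,p). nat (snd p - b))"
    using C by auto
qed

fun trunc_list :: "int \<Rightarrow> seg list \<Rightarrow> seg list" where
  "trunc_list b [] = []"
| "trunc_list b [x] = (if b + 1 \<le> snd x then [(b + 1, snd x)] else [])"
| "trunc_list b (x # y # zs) = (fst y, snd x) # trunc_list b (y # zs)"

definition removal_segs :: "seg \<Rightarrow> seg multiset \<Rightarrow> seg list" where
  "removal_segs D h = upsilon D h # rchain h (snd D) (upsilon D h)"

text \<open>r(D,h); None stands for \<infinity>.\<close>
definition rem_seg :: "seg \<Rightarrow> seg multiset \<Rightarrow> seg multiset option" where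
  "rem_seg D h =
    (if seg_admissible D h
     then Some (h - mset (removal_segs D h) + mset (trunc_list (snd D) (removal_segs D h)))
     else None)"

text \<open>r(m,h), computing along the ascending order obtained by sorting m
  lexicographically (segments with equal start are never linked).\<close>
definition rem_mult :: "seg multiset \<Rightarrow> seg multiset \<Rightarrow> seg multiset option" where
  "rem_mult m h = fold (\<lambda>D acc. Option.bind acc (rem_seg D)) (sorted_list_of_multiset m) (Some h)"

definition mult_admissible :: "seg multiset \<Rightarrow> seg multiset \<Rightarrow> bool" where
  "mult_admissible m h \<longleftrightarrow> rem_mult m h \<noteq> None"

definition min_start :: "seg multiset \<Rightarrow> int" where
  "min_start n = Min (fst ` set_mset n)"

definition fs :: "seg multiset \<Rightarrow> seg multiset \<Rightarrow> seg multiset" where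
  "fs n h =
    (let L = sorted_list_of_multiset (mult_at n (min_start n))
     in if mult_admissible (mult_at n (min_start n)) h
        then mset (map (\<lambda>i. upsilon (L ! i) (the (rem_mult (mset (take i L)) h))) [0..<length L])
        else {#})"

definition locally_minimizable :: "seg multiset \<Rightarrow> seg multiset \<Rightarrow> bool" where
  "locally_minimizable n h \<longleftrightarrow>
    mult_admissible n h \<and>
    (\<exists>Db\<in>#mult_at n (min_start n + 1).
       size (filter_mset (\<lambda>D. seg_sub Db D) (mult_at n (min_start n)))
       < size (filter_mset (\<lambda>D. seg_sub Db D) (fs n h)))"

end

theory Submission
  imports Defs
begin

text \<open>Removing a segment that begins at a only deletes segments and adds truncations,
  which begin strictly after a. Hence, along the removals defining fs(n,h), every segment
  beginning at a is already a segment of h, so the i-th segment of fs(n,h) is a segment of h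
  with the same beginning as the i-th segment of n[a] and containing it. Containment of the
  segment from n[a+1] is therefore inherited index by index from n[a] to fs(n,h), and at the
  index of Delta it is gained strictly, since the segment chosen there contains
  Upsilon(Delta,h) by the minimality of Upsilon.\<close>

declare rchain.simps [simp del]

lemma seg_sub_trans: "seg_sub r s \<Longrightarrow> seg_sub s t \<Longrightarrow> seg_sub r t"
  by (auto simp: seg_sub_def)

lemma rchain_start_greater: "s \<in> set (rchain h b p) \<Longrightarrow> fst p < fst s"
proof (induction h b p rule: rchain.induct)
  case (1 h b p)
  let ?C = "{s \<in> set_mset h. fst p < fst s \<and> b \<le> snd s \<and> snd s < snd p}"
  have "?C \<noteq> {}" and s: "s = Min ?C \<or> s \<in> set (rchain h b (Min ?C))"
    using "1.prems" by (simp_all add: rchain.simps [of h b p] Let_def split: if_splits)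
  have "Min ?C \<in> ?C"
    using \<open>?C \<noteq> {}\<close> by (intro Min_in) simp_all
  with s show ?case
    using "1.IH" [OF refl \<open>?C \<noteq> {}\<close>] by fastforce
qed

lemma trunc_list_start:
  "s \<in> set (trunc_list b xs) \<Longrightarrow> fst s = b + 1 \<or> fst s \<in> fst ` set (tl xs)"
  by (induction b xs rule: trunc_list.induct) (auto split: if_splits)

lemma upsilon_mem:
  assumes "seg_admissible D h"
  shows "upsilon D h \<in># h" "fst (upsilon D h) = fst D" "snd D \<le> snd (upsilon D h)"
proof -
  let ?S = "{s \<in> set_mset h. fst s = fst D \<and> snd D \<le> snd s}"
  have "Min ?S \<in> ?S"
    using assms by (intro Min_in) (auto simp: seg_admissible_def)
  then show "upsilon D h \<in># h" "fst (upsilon D h) = fst D" "snd D \<le> snd (upsilon D h)"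
    unfolding upsilon_def by auto
qed

lemma upsilon_seg_sub:
  assumes "s \<in># h" "fst s = fst D" "snd D \<le> snd s"
  shows "seg_sub (upsilon D h) s"
proof -
  let ?S = "{s \<in> set_mset h. fst s = fst D \<and> snd D \<le> snd s}"
  have "Min ?S \<le> s"
    using assms by (intro Min_le) auto
  moreover have "fst (Min ?S) = fst D"
    using upsilon_mem(2) assms unfolding upsilon_def seg_admissible_def by blast
  ultimately show ?thesis
    using assms unfolding upsilon_def seg_sub_def by (auto simp: less_eq_prod_def)
qed

lemma mem_rem_seg_same_start:
  assumes "rem_seg D h = Some h'" "is_seg D" "s \<in># h'" "fst s = fst D"
  shows "s \<in># h"
proof -
  let ?R = "removal_segs D h"
  have adm: "seg_admissible D h"
    using assms(1) by (simp add: rem_seg_def split: if_splits)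
  have "s \<notin> set (trunc_list (snd D) ?R)"
  proof
    assume "s \<in> set (trunc_list (snd D) ?R)"
    moreover have "fst s \<noteq> snd D + 1"
      using assms(2,4) by (simp add: is_seg_def)
    moreover have "fst s \<notin> fst ` set (tl ?R)"
      using rchain_start_greater upsilon_mem(2) [OF adm] assms(4)
      by (fastforce simp: removal_segs_def)
    ultimately show False
      using trunc_list_start by blast
  qed
  moreover have "h' = h - mset ?R + mset (trunc_list (snd D) ?R)"
    using assms(1) adm by (simp add: rem_seg_def)
  ultimately have "s \<in># h - mset ?R"
    using assms(3) by auto
  then show ?thesis
    by (rule in_diffD)
qed

fun rem_list :: "seg list \<Rightarrow> seg multiset \<Rightarrow> seg multiset option" where
  "rem_list [] h = Some h"
| "rem_list (D # xs) h = Option.bind (rem_seg D h) (rem_list xs)"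

lemma fold_rem_seg_eq_rem_list:
  "fold (\<lambda>D acc. Option.bind acc (rem_seg D)) xs acc = Option.bind acc (rem_list xs)"
  by (induction xs arbitrary: acc) (auto split: Option.bind_split)

lemma rem_mult_eq_rem_list: "rem_mult m h = rem_list (sorted_list_of_multiset m) h"
  by (simp add: rem_mult_def fold_rem_seg_eq_rem_list)

lemma rem_mult_sorted: "sorted xs \<Longrightarrow> rem_mult (mset xs) h = rem_list xs h"
  by (simp add: rem_mult_eq_rem_list sorted_sort_id)

lemma rem_list_append:
  "rem_list (xs @ ys) h = Option.bind (rem_list xs h) (rem_list ys)"
  by (induction xs arbitrary: h) (auto intro: Option.bind_cong)

lemma mem_rem_list_same_start:
  assumes "rem_list xs h = Some r" "\<forall>x\<in>set xs. is_seg x \<and> fst x = c"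
    "s \<in># r" "fst s = c"
  shows "s \<in># h"
  using assms
proof (induction xs arbitrary: h)
  case (Cons x xs)
  then obtain h' where "rem_seg x h = Some h'" "rem_list xs h' = Some r"
    by (auto simp: bind_eq_Some_conv)
  with Cons show ?case
    using mem_rem_seg_same_start by auto
qed simp

lemma sorted_starts_split:
  fixes xs :: "seg list"
  assumes "sorted xs" "\<forall>x\<in>set xs. a \<le> fst x"
  shows "xs = filter (\<lambda>s. fst s = a) xs @ filter (\<lambda>s. fst s \<noteq> a) xs"
  using assms
proof (induction xs)
  case (Cons x xs)
  show ?case
  proof (cases "fst x = a")
    case False
    then have "\<forall>y\<in>set xs. fst y \<noteq> a"
      using Cons.prems by (fastforce simp: less_eq_prod_def)
    with False show ?thesis
      by (simp add: filter_id_conv)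
  qed (use Cons in auto)
qed simp

lemma sorted_list_of_multiset_mult_at_prefix:
  assumes "\<forall>s\<in>#n. a \<le> fst s"
  shows "\<exists>ys. sorted_list_of_multiset n = sorted_list_of_multiset (mult_at n a) @ ys"
proof -
  let ?xs = "sorted_list_of_multiset n"
  have "sorted (filter (\<lambda>s. fst s = a) ?xs)"
    by (simp add: sorted_wrt_filter)
  moreover have "mset (filter (\<lambda>s. fst s = a) ?xs) = mult_at n a"
    by (simp add: mult_at_def)
  ultimately have "sorted_list_of_multiset (mult_at n a) = filter (\<lambda>s. fst s = a) ?xs"
    by (metis sorted_list_of_multiset_mset sorted_sort_id)
  then show ?thesis
    using sorted_starts_split [of ?xs a] assms by auto
qed

lemma mult_admissible_mult_at_min_start:
  assumes "mult_admissible n h"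
  shows "mult_admissible (mult_at n (min_start n)) h"
proof -
  have "\<forall>s\<in>#n. min_start n \<le> fst s"
    by (simp add: min_start_def)
  then obtain ys where "sorted_list_of_multiset n
      = sorted_list_of_multiset (mult_at n (min_start n)) @ ys"
    using sorted_list_of_multiset_mult_at_prefix by blast
  with assms show ?thesis
    by (auto simp: mult_admissible_def rem_mult_eq_rem_list rem_list_append bind_eq_None_conv)
qed

lemma fs_dominates_mult_at_min_start:
  assumes "is_mult n" "mult_admissible n h"
  defines "L \<equiv> sorted_list_of_multiset (mult_at n (min_start n))"
  shows "\<exists>M. fs n h = mset M
    \<and> list_all2 (\<lambda>D F. F \<in># h \<and> fst F = fst D \<and> snd D \<le> snd F) L M"
proof -
  define F where "F i = upsilon (L ! i) (the (rem_mult (mset (take i L)) h))" for i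
  have "fs n h = mset (map F [0..<length L])"
    using mult_admissible_mult_at_min_start [OF assms(2)]
    by (simp add: fs_def F_def [abs_def] L_def Let_def)
  moreover have "F i \<in># h \<and> fst (F i) = fst (L ! i) \<and> snd (L ! i) \<le> snd (F i)"
    if "i < length L" for i
  proof -
    have "rem_list L h \<noteq> None"
      using mult_admissible_mult_at_min_start [OF assms(2)]
      by (simp add: L_def mult_admissible_def rem_mult_sorted [symmetric])
    moreover have
      "rem_list L h = Option.bind (rem_list (take i L) h) (rem_list (L ! i # drop (Suc i) L))"
      using rem_list_append [of "take i L" "L ! i # drop (Suc i) L" h] id_take_nth_drop [OF that]
      by simp
    ultimately obtain r where r: "rem_list (take i L) h = Some r"
      and "rem_seg (L ! i) r \<noteq> None"
      by (auto simp: bind_eq_None_conv)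
    then have adm: "seg_admissible (L ! i) r"
      by (simp add: rem_seg_def split: if_splits)
    have F: "F i = upsilon (L ! i) r"
      using r by (simp add: F_def L_def rem_mult_sorted sorted_wrt_take)
    have "\<forall>x\<in>set L. is_seg x \<and> fst x = min_start n"
      using assms(1) by (auto simp: L_def is_mult_def mult_at_def)
    then have "\<forall>x\<in>set (take i L). is_seg x \<and> fst x = fst (L ! i)"
      using that by (auto dest: in_set_takeD)
    then have "upsilon (L ! i) r \<in># h"
      using mem_rem_list_same_start [OF r _ upsilon_mem(1,2) [OF adm]] by blast
    then show ?thesis
      using upsilon_mem [OF adm] F by simp
  qed
  ultimately show ?thesis
    by (intro exI [of _ "map F [0..<length L]"]) (auto simp: list_all2_conv_all_nth)
qed

lemma size_filter_mset_le_list_all2: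
  "list_all2 (\<lambda>x y. P x \<longrightarrow> P y) xs ys
    \<Longrightarrow> size (filter_mset P (mset xs)) \<le> size (filter_mset P (mset ys))"
  by (induction rule: list_all2_induct) auto

lemma size_filter_mset_less_list_all2:
  assumes "list_all2 (\<lambda>x y. P x \<longrightarrow> P y) xs ys" "(x, y) \<in> set (zip xs ys)" "\<not> P x" "P y"
  shows "size (filter_mset P (mset xs)) < size (filter_mset P (mset ys))"
  using assms
proof (induction rule: list_all2_induct)
  case (Cons x' xs y' ys)
  then show ?case
    using size_filter_mset_le_list_all2 [OF Cons.hyps(2)] by (auto simp: le_imp_less_Suc)
qed simp

theorem mainTheorem9:
  fixes h n :: "seg multiset" and a :: int and D :: seg
  assumes "is_mult h" and "is_mult n"
    and "mult_admissible n h" and "n \<noteq> {#}"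
    and "a = min_start n"
    and "D \<in># mult_at n a"
    and "\<exists>Db\<in>#mult_at n (a + 1). \<not> seg_sub Db D \<and> seg_sub Db (upsilon D h)"
  shows "locally_minimizable n h"
proof -
  obtain Db where Db: "Db \<in># mult_at n (a + 1)" "\<not> seg_sub Db D" "seg_sub Db (upsilon D h)"
    using assms(7) by blast
  let ?L = "sorted_list_of_multiset (mult_at n a)"
  let ?R = "\<lambda>D F. F \<in># h \<and> fst F = fst D \<and> snd D \<le> snd F"
  obtain M where M: "fs n h = mset M" "list_all2 ?R ?L M"
    using fs_dominates_mult_at_min_start [OF assms(2,3)] assms(5) by blast
  have mono: "list_all2 (\<lambda>x y. seg_sub Db x \<longrightarrow> seg_sub Db y) ?L M"
    using M(2) by (rule list_all2_mono) (auto simp: seg_sub_def)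
  obtain F where DF: "(D, F) \<in> set (zip ?L M)"
    using assms(6) list_all2_lengthD [OF M(2)]
    by (metis in_set_impl_in_set_zip1 set_sorted_list_of_multiset)
  then have "?R D F"
    using M(2) by (auto simp: list_all2_iff)
  then have "seg_sub Db F"
    using seg_sub_trans [OF Db(3) upsilon_seg_sub] by blast
  then have "size (filter_mset (seg_sub Db) (mult_at n a))
      < size (filter_mset (seg_sub Db) (fs n h))"
    using size_filter_mset_less_list_all2 [OF mono DF Db(2)] M(1) by simp
  then show ?thesis
    using assms(3,5) Db(1) by (auto simp: locally_minimizable_def)
qed

end
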